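(* Let $\Theta$ be an open saturated branch of a tableau in $\mathbf{TAB}_{\mathbf{IB}}$, let $\mathcal{M}^\Theta=(W^\Theta,R^\Theta,V^\Theta)$ be its model, and let $W^\Theta_r=\{w\in W^\Theta \mid wR^\Theta w\}$. If $i\in W^\Theta_r$, then $i$ is not named by the root formula of $\Theta$, i.e. there is no nominal $j$ with $j\in T^\Theta(i)$.
   Context: Hybrid language: fix disjoint countably infinite sets $\mathbf{Prop}$ (propositional variables) and $\mathbf{Nom}$ (nominals). Formulas: $\varphi ::= p \mid i \mid \neg\varphi \mid \varphi\land\varphi \mid \Diamond\varphi \mid @_i\varphi$ with $p\in\mathbf{Prop}$, $i\in\mathbf{Nom}$; $\Box\varphi$ abbreviates $\neg\Diamond\neg\varphi$. Tableau calculus $\mathbf{TAB}_{\mathbf{IB}}$. A tableau is a well-founded tree whose nodes are formulas of the form $@_i\varphi$; its root is a formula $@_i\varphi$ (the root formula) where $i$ does not occur in $\varphi$. A branch is a maximal path; $\varphi\in\Theta$ means $\varphi$ occurs on branch $\Theta$. Each branch is extended by applying the rules below to its formulas as often as possible, except that no further formula is added to a branch once either (i) every new formula generated by applying any rule already occurs on the branch, or (ii) the branch is closed, i.e. contains $@_i\varphi$ and $@_i\neg\varphi$ for some formula $\varphi$ and nominal $i$. Open means not closed. A branch is saturated if every new formula generated by applying some rule already occurs on it. An accessibility formula is a formula $@_i\Diamond j$ added by rule $[\Diamond]$ (with $j$ the new nominal). Rules (premises already on the branch; conclusions added to it): [$\neg\neg$] from $@_i\neg\neg\varphi$ add $@_i\varphi$;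 [$\land$] from $@_i(\varphi\land\psi)$ add $@_i\varphi$ and $@_i\psi$; [$\neg\land$] from $@_i\neg(\varphi\land\psi)$ split the branch into one extended by $@_i\neg\varphi$ and one extended by $@_i\neg\psi$; [$\Diamond$] from $@_i\Diamond\varphi$, which is not an accessibility formula, add $@_i\Diamond j$ and $@_j\varphi$ where $j$ is a nominal not occurring on the branch; this rule is applied at most once per formula, and only if $i$ is a quasi-urfather on the branch (defined below); [$\neg\Diamond$] from $@_i\neg\Diamond\varphi$ and $@_i\Diamond j$ add $@_j\neg\varphi$; [$\Box_{sym}$] from $@_i\Box\varphi$ and $@_j\Diamond i$ add $@_j\varphi$; [$@$] from $@_i@_j\varphi$ add $@_j\varphi$; [$\neg@$] from $@_i\neg@_j\varphi$ add $@_j\neg\varphi$; [$Id$] from $@_i\varphi$, which is not an accessibility formula, and $@_i j$ add $@_j\varphi$; [$Ref$] for any nominal $i$ occurring on the branch add $@_i i$; ($\mathcal{I}$) for any nominal $i$ occurring on the branch add $@_i\neg\Diamond i$. Auxiliary notions for a branch $\Theta$. $@_i\varphi$ is a quasi-subformula of $@_j\psi$ if $\varphi$ is a subformula of $\psi$, or $\varphi=\neg\chi$ with $\chi$ a subformula of $\psi$. For a nominal $i$ occurring in $\Theta$, $T^\Theta(i)=\{\varphi \mid @_i\varphi\in\Theta$ and $@_i\varphi$ is a quasi-subformula of the root formula$\}$. Nominals $i,j$ are twins if $T^\Theta(i)=T^\Theta(j)$. $i\prec_\Theta j$ if $j$ was introduced by applying $[\Diamond]$ to a formula $@_i\Diamond\varphi$;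 $\prec_\Theta^*$ is its reflexive transitive closure. A nominal $i$ is a quasi-urfather on $\Theta$ if there are no twins $j\neq k$ with $j\prec_\Theta^* i$ and $k\prec_\Theta^* i$. The identity urfather $v_\Theta(i)$ of a nominal $i$ occurring in $\Theta$ is the earliest introduced nominal $j$ on $\Theta$ such that $j$ is a twin of $i$ and $j$ is a quasi-urfather; it may fail to exist, and $\mathrm{dom}(v_\Theta)$ denotes the set of nominals for which it exists. A nominal is called an identity urfather on $\Theta$ if it is the identity urfather of some nominal (equivalently $v_\Theta(i)=i$). The model $\mathcal{M}^\Theta=(W^\Theta,R^\Theta,V^\Theta)$ of an open saturated branch $\Theta$ with root formula $@_{i_0}\varphi_0$: $W^\Theta$ is the set of identity urfathers on $\Theta$; $R^\Theta=\{(v_\Theta(i),v_\Theta(j)) \mid @_i\Diamond j\in\Theta,\ i,j\in\mathrm{dom}(v_\Theta)\}\cup\{(v_\Theta(j),v_\Theta(i)) \mid @_i\Diamond j\in\Theta,\ i,j\in\mathrm{dom}(v_\Theta)\}$; $V^\Theta(p)=\{v_\Theta(i)\mid @_i p\in\Theta\}$ for $p\in\mathbf{Prop}$; for a nominal $i$, $V^\Theta(i)=\{v_\Theta(i)\}$ if $i\in\mathrm{dom}(v_\Theta)$ and $V^\Theta(i)=\{i_0\}$ otherwise. A world $i\in W^\Theta$ is named by the root formula of $\Theta$ if there is a nominal $j$ with $j\in T^\Theta(i)$. *)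

theory Defs
  imports Main
begin

datatype fm = Pro nat | Nom nat | Neg fm | Con fm fm | Dia fm | At nat fm

abbreviation Box :: "fm \<Rightarrow> fm" where "Box \<phi> \<equiv> Neg (Dia (Neg \<phi>))"

fun nomsfm :: "fm \<Rightarrow> nat set" where
  "nomsfm (Pro p) = {}"
| "nomsfm (Nom i) = {i}"
| "nomsfm (Neg \<phi>) = nomsfm \<phi>"
| "nomsfm (Con \<phi> \<psi>) = nomsfm \<phi> \<union> nomsfm \<psi>"
| "nomsfm (Dia \<phi>) = nomsfm \<phi>"
| "nomsfm (At i \<phi>) = insert i (nomsfm \<phi>)"

fun subfms :: "fm \<Rightarrow> fm set" where
  "subfms (Pro p) = {Pro p}"
| "subfms (Nom i) = {Nom i}"
| "subfms (Neg \<phi>) = insert (Neg \<phi>) (subfms \<phi>)"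
| "subfms (Con \<phi> \<psi>) = insert (Con \<phi> \<psi>) (subfms \<phi> \<union> subfms \<psi>)"
| "subfms (Dia \<phi>) = insert (Dia \<phi>) (subfms \<phi>)"
| "subfms (At i \<phi>) = insert (At i \<phi>) (subfms \<phi>)"

text \<open>A branch is the list of its nodes in order of addition. A node (i, phi, src)
  stands for the formula at_i phi; src = Some psi marks an accessibility formula
  at_i Dia j produced by applying rule Dia to at_i Dia psi.\<close>

type_synonym entry = "nat \<times> fm \<times> fm option"

definition fms :: "entry list \<Rightarrow> (nat \<times> fm) set" where
  "fms B = {(i, \<phi>). \<exists>s. (i, \<phi>, s) \<in> set B}"

definition entry_noms :: "entry \<Rightarrow> nat set" where
  "entry_noms e = insert (fst e) (nomsfm (fst (snd e)))"

definition noms :: "entry list \<Rightarrow> nat set" where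
  "noms B = (\<Union>e\<in>set B. entry_noms e)"

definition closed :: "entry list \<Rightarrow> bool" where
  "closed B \<longleftrightarrow> (\<exists>i \<phi>. (i, \<phi>) \<in> fms B \<and> (i, Neg \<phi>) \<in> fms B)"

definition root_fm :: "entry list \<Rightarrow> fm" where
  "root_fm B = fst (snd (hd B))"

definition quasi_sub :: "fm \<Rightarrow> fm \<Rightarrow> bool" where
  "quasi_sub \<phi> \<psi> \<longleftrightarrow> \<phi> \<in> subfms \<psi> \<or> (\<exists>\<chi>. \<phi> = Neg \<chi> \<and> \<chi> \<in> subfms \<psi>)"

definition T :: "entry list \<Rightarrow> nat \<Rightarrow> fm set" where
  "T B i = {\<phi>. (i, \<phi>) \<in> fms B \<and> quasi_sub \<phi> (root_fm B)}"

definition twins :: "entry list \<Rightarrow> nat \<Rightarrow> nat \<Rightarrow> bool" where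
  "twins B i j \<longleftrightarrow> i \<in> noms B \<and> j \<in> noms B \<and> T B i = T B j"

definition prec :: "entry list \<Rightarrow> nat \<Rightarrow> nat \<Rightarrow> bool" where
  "prec B i j \<longleftrightarrow> (\<exists>\<phi>. (i, Dia (Nom j), Some \<phi>) \<in> set B)"

definition quasi_urfather :: "entry list \<Rightarrow> nat \<Rightarrow> bool" where
  "quasi_urfather B i \<longleftrightarrow>
     \<not> (\<exists>j k. j \<noteq> k \<and> twins B j k \<and> (prec B)\<^sup>*\<^sup>* j i \<and> (prec B)\<^sup>*\<^sup>* k i)"

inductive rule_lin :: "entry list \<Rightarrow> entry list \<Rightarrow> bool" where
  NegNeg: "(i, Neg (Neg \<phi>)) \<in> fms B \<Longrightarrow> rule_lin B [(i, \<phi>, None)]"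
| Con: "(i, Con \<phi> \<psi>) \<in> fms B \<Longrightarrow> rule_lin B [(i, \<phi>, None), (i, \<psi>, None)]"
| Dia: "(i, Dia \<phi>, None) \<in> set B \<Longrightarrow> \<not> (\<exists>k. (i, Dia (Nom k), Some \<phi>) \<in> set B) \<Longrightarrow>
        quasi_urfather B i \<Longrightarrow> j \<notin> noms B \<Longrightarrow>
        rule_lin B [(i, Dia (Nom j), Some \<phi>), (j, \<phi>, None)]"
| NegDia: "(i, Neg (Dia \<phi>)) \<in> fms B \<Longrightarrow> (i, Dia (Nom j)) \<in> fms B \<Longrightarrow>
        rule_lin B [(j, Neg \<phi>, None)]"
| BoxSym: "(i, Box \<phi>) \<in> fms B \<Longrightarrow> (j, Dia (Nom i)) \<in> fms B \<Longrightarrow>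
        rule_lin B [(j, \<phi>, None)]"
| At: "(i, At j \<phi>) \<in> fms B \<Longrightarrow> rule_lin B [(j, \<phi>, None)]"
| NegAt: "(i, Neg (At j \<phi>)) \<in> fms B \<Longrightarrow> rule_lin B [(j, Neg \<phi>, None)]"
| Id: "(i, \<phi>, None) \<in> set B \<Longrightarrow> (i, Nom j) \<in> fms B \<Longrightarrow> rule_lin B [(j, \<phi>, None)]"
| Ref: "i \<in> noms B \<Longrightarrow> rule_lin B [(i, Nom i, None)]"
| Irr: "i \<in> noms B \<Longrightarrow> rule_lin B [(i, Neg (Dia (Nom i)), None)]"

inductive rule_app :: "entry list \<Rightarrow> entry list \<Rightarrow> bool" where
  lin: "rule_lin B new \<Longrightarrow> rule_app B new"
| NegConL: "(i, Neg (Con \<phi> \<psi>)) \<in> fms B \<Longrightarrow> rule_app B [(i, Neg \<phi>, None)]"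
| NegConR: "(i, Neg (Con \<phi> \<psi>)) \<in> fms B \<Longrightarrow> rule_app B [(i, Neg \<psi>, None)]"

definition saturated :: "entry list \<Rightarrow> bool" where
  "saturated B \<longleftrightarrow>
     (\<forall>new. rule_lin B new \<longrightarrow> fms new \<subseteq> fms B) \<and>
     (\<forall>i \<phi> \<psi>. (i, Neg (Con \<phi> \<psi>)) \<in> fms B \<longrightarrow>
                 (i, Neg \<phi>) \<in> fms B \<or> (i, Neg \<psi>) \<in> fms B)"

text \<open>Branches of TAB_IB tableaux (initial segments of them, in construction order).\<close>
inductive tab_branch :: "entry list \<Rightarrow> bool" where
  root: "i \<notin> nomsfm \<phi> \<Longrightarrow> tab_branch [(i, \<phi>, None)]"
| step: "tab_branch B \<Longrightarrow> \<not> closed B \<Longrightarrow> \<not> saturated B \<Longrightarrow> rule_app B new \<Longrightarrow>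
         tab_branch (B @ new)"

definition intro_pos :: "entry list \<Rightarrow> nat \<Rightarrow> nat" where
  "intro_pos B j = (LEAST n. n < length B \<and> j \<in> entry_noms (B ! n))"

definition uf_cands :: "entry list \<Rightarrow> nat \<Rightarrow> nat set" where
  "uf_cands B i = {j. twins B i j \<and> quasi_urfather B j}"

text \<open>Identity urfather: earliest introduced candidate (ties, which can only occur among
  nominals of the root formula, are broken by the smaller index).\<close>
definition v :: "entry list \<Rightarrow> nat \<Rightarrow> nat option" where
  "v B i = (if uf_cands B i = {} then None
            else (let m = Min (intro_pos B ` uf_cands B i)
                  in Some (Min {j \<in> uf_cands B i. intro_pos B j = m})))"

definition W :: "entry list \<Rightarrow> nat set" where
  "W B = {w. \<exists>k. v B k = Some w}"

definition R :: "entry list \<Rightarrow> (nat \<times> nat) set" where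
  "R B = {(a, b). \<exists>i j. (i, Dia (Nom j)) \<in> fms B \<and> v B i = Some a \<and> v B j = Some b}
       \<union> {(b, a). \<exists>i j. (i, Dia (Nom j)) \<in> fms B \<and> v B i = Some a \<and> v B j = Some b}"

definition Wr :: "entry list \<Rightarrow> nat set" where
  "Wr B = {w \<in> W B. (w, w) \<in> R B}"

end

theory Submission
  imports Defs
begin

text \<open>A reflexive world i of the branch model comes from an accessibility formula
  @_a Dia b whose nominals a and b are both twins of i. If some nominal c were in T(i),
  then @_a c and @_b c would lie on the branch, so by Ref and Id also @_a b; rule Id then
  transports the irreflexivity formula @_b Neg Dia b to @_a Neg Dia b, which closes the
  branch against @_a Dia b.\<close>

lemma tab_branch_Some_is_accessibility:
  assumes "tab_branch B" and "(a, \<phi>, Some \<psi>) \<in> set B"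
  shows "\<exists>k. \<phi> = Dia (Nom k)"
  using assms
proof (induction arbitrary: a \<phi> \<psi>)
  case (root i \<phi>)
  then show ?case by auto
next
  case (step B new)
  have new: "\<exists>k. \<phi> = Dia (Nom k)" if "(a, \<phi>, Some \<psi>) \<in> set new" for a \<phi> \<psi>
    using step.hyps(4) that by cases (auto elim: rule_lin.cases)
  from step.prems have "(a, \<phi>, Some \<psi>) \<in> set B \<or> (a, \<phi>, Some \<psi>) \<in> set new"
    by simp
  then show ?case using step.IH new by blast
qed

lemma tab_branch_fms_None:
  assumes "tab_branch B" and "(a, \<phi>) \<in> fms B" and "\<forall>k. \<phi> \<noteq> Dia (Nom k)"
  shows "(a, \<phi>, None) \<in> set B"
proof -
  obtain s where s: "(a, \<phi>, s) \<in> set B" using assms(2) unfolding fms_def by auto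
  then show ?thesis
    using tab_branch_Some_is_accessibility[OF assms(1)] assms(3) by (cases s) auto
qed

lemma fms_imp_noms: "(a, \<phi>) \<in> fms B \<Longrightarrow> a \<in> noms B"
  unfolding fms_def noms_def entry_noms_def by force

lemma finite_noms: "finite (noms B)"
proof -
  have "finite (nomsfm \<phi>)" for \<phi> by (induction \<phi>) auto
  then show ?thesis unfolding noms_def entry_noms_def by auto
qed

lemma v_Some_imp_twins:
  assumes "v B x = Some y"
  shows "twins B x y"
proof -
  let ?C = "uf_cands B x"
  let ?m = "Min (intro_pos B ` ?C)"
  have ne: "?C \<noteq> {}" using assms unfolding v_def by (auto split: if_splits)
  have fin: "finite ?C"
    by (rule finite_subset[OF _ finite_noms[of B]]) (auto simp: uf_cands_def twins_def)
  have "?m \<in> intro_pos B ` ?C" using fin ne by (intro Min_in) auto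
  then have "{j \<in> ?C. intro_pos B j = ?m} \<noteq> {}" by auto
  moreover have "y = Min {j \<in> ?C. intro_pos B j = ?m}"
    using assms ne unfolding v_def by (auto simp: Let_def)
  ultimately have "y \<in> ?C" using fin Min_in[of "{j \<in> ?C. intro_pos B j = ?m}"] by auto
  then show ?thesis unfolding uf_cands_def by simp
qed

lemma reflexive_world_imp_twin_accessibility:
  assumes "(w, w) \<in> R B"
  obtains a b where "(a, Dia (Nom b)) \<in> fms B" and "twins B a w" and "twins B b w"
  using assms v_Some_imp_twins unfolding R_def by auto

context
  fixes B :: "entry list"
  assumes branch: "tab_branch B" and sat: "saturated B"
begin

lemma saturated_fms_of_rule_lin:
  "rule_lin B [(a, \<phi>, None)] \<Longrightarrow> (a, \<phi>) \<in> fms B"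
  using sat unfolding saturated_def fms_def by auto

lemma saturated_Id:
  assumes "(a, \<phi>) \<in> fms B" and "(a, Nom b) \<in> fms B" and "\<forall>k. \<phi> \<noteq> Dia (Nom k)"
  shows "(b, \<phi>) \<in> fms B"
  using tab_branch_fms_None[OF branch assms(1,3)] assms(2)
  by (rule saturated_fms_of_rule_lin[OF rule_lin.Id])

lemma saturated_nominal_sym:
  assumes "(a, Nom b) \<in> fms B"
  shows "(b, Nom a) \<in> fms B"
proof -
  have "(a, Nom a) \<in> fms B"
    using fms_imp_noms[OF assms] by (rule saturated_fms_of_rule_lin[OF rule_lin.Ref])
  then show ?thesis using assms by (rule saturated_Id) simp
qed

lemma saturated_common_nominal:
  assumes "(a, Nom c) \<in> fms B" and "(b, Nom c) \<in> fms B"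
  shows "(a, Nom b) \<in> fms B"
  using saturated_nominal_sym[OF assms(2)] saturated_nominal_sym[OF assms(1)]
  by (rule saturated_Id) simp

lemma open_saturated_accessibility_no_common_nominal:
  assumes "\<not> closed B" and "(a, Dia (Nom b)) \<in> fms B"
    and "(a, Nom c) \<in> fms B" and "(b, Nom c) \<in> fms B"
  shows False
proof -
  have "(b, Neg (Dia (Nom b))) \<in> fms B"
    using fms_imp_noms[OF assms(4)] by (rule saturated_fms_of_rule_lin[OF rule_lin.Irr])
  moreover have "(b, Nom a) \<in> fms B"
    using assms(4,3) by (rule saturated_common_nominal)
  ultimately have "(a, Neg (Dia (Nom b))) \<in> fms B" by (rule saturated_Id) simp
  then show False using assms(1,2) unfolding closed_def by blast
qed

end

theorem lemma11:
  assumes "tab_branch B" and "\<not> closed B" and "saturated B"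
    and "i \<in> Wr B"
  shows "\<not> (\<exists>j. Nom j \<in> T B i)"
proof
  assume "\<exists>j. Nom j \<in> T B i"
  then obtain c where c: "Nom c \<in> T B i" ..
  from assms(4) have "(i, i) \<in> R B" unfolding Wr_def by simp
  then obtain a b where acc: "(a, Dia (Nom b)) \<in> fms B"
    and "twins B a i" and "twins B b i"
    by (rule reflexive_world_imp_twin_accessibility)
  then have "(a, Nom c) \<in> fms B" and "(b, Nom c) \<in> fms B"
    using c unfolding twins_def T_def by auto
  then show False
    by (rule open_saturated_accessibility_no_common_nominal[OF assms(1,3,2) acc])
qed

end
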